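(* Let $(H,+,\circ)$ be a commutative multiplicative hyperring with identity $1$ such that $1+1\in U(H)$, and let $P$ be a nonzero sdf-absorbing strong $\mathcal{C}$-hyperideal of $H$. Then $P$ is a prime hyperideal of $H$.
   Context: A commutative multiplicative hyperring $(H,+,\circ)$ consists of an abelian group $(H,+)$ and an associative, commutative hyperoperation $\circ: H\times H\to P^*(H)$ with $x\circ(y+z)\subseteq x\circ y+x\circ z$ and $x\circ(-y)=-(x\circ y)=(-x)\circ y$. For subsets $A,B$, $A\circ B=\bigcup_{a\in A,b\in B}a\circ b$, $A\pm B=\{a\pm b\}$; $x^2=x\circ x$. Identity: $x\in x\circ 1$ for all $x$. $U(H)$ is the set of units, i.e. $x$ with $1\in x\circ y$ for some $y\in H$. A hyperideal is a nonempty $P$ with $x-y\in P$ and $r\circ x\subseteq P$ for $x,y\in P$, $r\in H$; it is prime if proper and $x\circ y\subseteq P$ implies $x\in P$ or $y\in P$. Let $\mathcal{C}=\{c_1\circ\cdots\circ c_n: c_i\in H\}$ and $\mathfrak{C}=\{\sum_{i=1}^m C_i: C_i\in\mathcal{C}\}$; $P$ is a strong $\mathcal{C}$-hyperideal if for every $D\in\mathfrak{C}$, $D\cap P\neq\varnothing$ implies $D\subseteq P$. A proper hyperideal $P$ is sdf-absorbing if whenever $0\neq x,y\in H$ and $x^2-y^2\subseteq P$, then $x-y\in P$ or $x+y\in P$. *)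

theory Defs
  imports Main
begin

text \<open>A commutative multiplicative hyperring: the abelian group (H,+) is the type 'a
  (class ab_group_add), and the hyperoperation is m :: 'a => 'a => 'a set.\<close>

definition hmul :: "('a \<Rightarrow> 'a \<Rightarrow> 'a set) \<Rightarrow> 'a set \<Rightarrow> 'a set \<Rightarrow> 'a set" where
  "hmul m A B = (\<Union>a\<in>A. \<Union>b\<in>B. m a b)"

definition sadd :: "'a::ab_group_add set \<Rightarrow> 'a set \<Rightarrow> 'a set" where
  "sadd A B = {a + b | a b. a \<in> A \<and> b \<in> B}"

definition ssub :: "'a::ab_group_add set \<Rightarrow> 'a set \<Rightarrow> 'a set" where
  "ssub A B = {a - b | a b. a \<in> A \<and> b \<in> B}"

definition comm_mult_hyperring :: "('a::ab_group_add \<Rightarrow> 'a \<Rightarrow> 'a set) \<Rightarrow> bool" where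
  "comm_mult_hyperring m \<longleftrightarrow>
     (\<forall>x y. m x y \<noteq> {}) \<and>
     (\<forall>x y z. hmul m (m x y) {z} = hmul m {x} (m y z)) \<and>
     (\<forall>x y. m x y = m y x) \<and>
     (\<forall>x y z. m x (y + z) \<subseteq> sadd (m x y) (m x z)) \<and>
     (\<forall>x y. m x (- y) = uminus ` (m x y) \<and> m (- x) y = uminus ` (m x y))"

definition hr_identity :: "('a \<Rightarrow> 'a \<Rightarrow> 'a set) \<Rightarrow> 'a \<Rightarrow> bool" where
  "hr_identity m e \<longleftrightarrow> (\<forall>x. x \<in> m x e)"

definition hr_units :: "('a \<Rightarrow> 'a \<Rightarrow> 'a set) \<Rightarrow> 'a \<Rightarrow> 'a set" where
  "hr_units m e = {x. \<exists>y. e \<in> m x y}"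

definition hyperideal :: "('a::ab_group_add \<Rightarrow> 'a \<Rightarrow> 'a set) \<Rightarrow> 'a set \<Rightarrow> bool" where
  "hyperideal m P \<longleftrightarrow> P \<noteq> {} \<and> (\<forall>x\<in>P. \<forall>y\<in>P. x - y \<in> P) \<and> (\<forall>r. \<forall>x\<in>P. m r x \<subseteq> P)"

definition prime_hyperideal :: "('a::ab_group_add \<Rightarrow> 'a \<Rightarrow> 'a set) \<Rightarrow> 'a set \<Rightarrow> bool" where
  "prime_hyperideal m P \<longleftrightarrow> hyperideal m P \<and> P \<noteq> UNIV \<and>
     (\<forall>x y. m x y \<subseteq> P \<longrightarrow> x \<in> P \<or> y \<in> P)"

inductive_set Cfam :: "('a \<Rightarrow> 'a \<Rightarrow> 'a set) \<Rightarrow> 'a set set" for m where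
  single: "{c} \<in> Cfam m"
| step: "A \<in> Cfam m \<Longrightarrow> hmul m A {c} \<in> Cfam m"

inductive_set CSums :: "('a::ab_group_add \<Rightarrow> 'a \<Rightarrow> 'a set) \<Rightarrow> 'a set set" for m where
  base: "A \<in> Cfam m \<Longrightarrow> A \<in> CSums m"
| step: "D \<in> CSums m \<Longrightarrow> A \<in> Cfam m \<Longrightarrow> sadd D A \<in> CSums m"

definition strong_C_hyperideal :: "('a::ab_group_add \<Rightarrow> 'a \<Rightarrow> 'a set) \<Rightarrow> 'a set \<Rightarrow> bool" where
  "strong_C_hyperideal m P \<longleftrightarrow> hyperideal m P \<and>
     (\<forall>D\<in>CSums m. D \<inter> P \<noteq> {} \<longrightarrow> D \<subseteq> P)"

definition sdf_absorbing :: "('a::ab_group_add \<Rightarrow> 'a \<Rightarrow> 'a set) \<Rightarrow> 'a set \<Rightarrow> bool" where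
  "sdf_absorbing m P \<longleftrightarrow> hyperideal m P \<and> P \<noteq> UNIV \<and>
     (\<forall>x y. x \<noteq> 0 \<longrightarrow> y \<noteq> 0 \<longrightarrow> ssub (m x x) (m y y) \<subseteq> P \<longrightarrow> x - y \<in> P \<or> x + y \<in> P)"

end

theory Submission
  imports Defs
begin

text \<open>In a strong \<open>\<C>\<close>-hyperideal \<open>P\<close> all elements of a hyperproduct are congruent
  modulo \<open>P\<close>, since \<open>A - A\<close> is a sum of hyperproducts containing \<open>0\<close>. This lets one
  compute with hyperproducts as with ordinary products modulo \<open>P\<close>. If \<open>x \<circ> y \<subseteq> P\<close>
  and \<open>x \<noteq> \<plusminus>y\<close>, then \<open>(x + y)\<^sup>2 - (x - y)\<^sup>2 \<subseteq> P\<close>, so sdf-absorption puts \<open>2x\<close> or \<open>2y\<close>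
  into \<open>P\<close>, and \<open>x\<close> or \<open>y\<close> follows because \<open>2\<close> is a unit. The degenerate case
  \<open>x = \<plusminus>y\<close> means \<open>x\<^sup>2 \<subseteq> P\<close>; there one applies sdf-absorption to \<open>x + i\<close> and \<open>i\<close>
  for some nonzero \<open>i \<in> P\<close>.\<close>

lemma hr_mul_assoc: "comm_mult_hyperring m \<Longrightarrow> hmul m (m x y) {z} = hmul m {x} (m y z)"
  by (simp add: comm_mult_hyperring_def)

lemma hr_mul_commute: "comm_mult_hyperring m \<Longrightarrow> m x y = m y x"
  by (simp add: comm_mult_hyperring_def)

lemma hr_mul_add_subset: "comm_mult_hyperring m \<Longrightarrow> m x (y + z) \<subseteq> sadd (m x y) (m x z)"
  by (simp add: comm_mult_hyperring_def)

lemma hr_mul_uminus_right: "comm_mult_hyperring m \<Longrightarrow> m x (- y) = uminus ` m x y"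
  by (simp add: comm_mult_hyperring_def)

lemma hr_mul_uminus_left: "comm_mult_hyperring m \<Longrightarrow> m (- x) y = uminus ` m x y"
  by (simp add: comm_mult_hyperring_def)

lemma hr_mul_uminus_uminus: "comm_mult_hyperring m \<Longrightarrow> m (- x) (- y) = m x y"
  by (simp add: hr_mul_uminus_left hr_mul_uminus_right image_image)

lemma hmul_singletons [simp]: "hmul m {x} {y} = m x y"
  by (simp add: hmul_def)

lemma hr_identityD: "hr_identity m e \<Longrightarrow> x \<in> m x e"
  by (simp add: hr_identity_def)

lemma hr_mem_mul_add_right:
  assumes "comm_mult_hyperring m" and "s \<in> m x (y + z)"
  obtains a b where "s = a + b" "a \<in> m x y" "b \<in> m x z"
proof -
  have "s \<in> sadd (m x y) (m x z)"
    using hr_mul_add_subset[OF assms(1)] assms(2) by blast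
  then show thesis
    using that by (auto simp: sadd_def)
qed

lemma hr_mem_mul_add_left:
  assumes "comm_mult_hyperring m" and "s \<in> m (x + y) z"
  obtains a b where "s = a + b" "a \<in> m x z" "b \<in> m y z"
  using hr_mem_mul_add_right[OF assms(1)] assms(2) hr_mul_commute[OF assms(1)] by metis

lemma hyperideal_zero: "hyperideal m P \<Longrightarrow> 0 \<in> P"
  unfolding hyperideal_def by (metis all_not_in_conv diff_self)

lemma hyperideal_uminus: "hyperideal m P \<Longrightarrow> x \<in> P \<Longrightarrow> - x \<in> P"
  using hyperideal_zero unfolding hyperideal_def by (metis diff_0)

lemma hyperideal_diff: "hyperideal m P \<Longrightarrow> x \<in> P \<Longrightarrow> y \<in> P \<Longrightarrow> x - y \<in> P"
  unfolding hyperideal_def by blast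

lemma hyperideal_add: "hyperideal m P \<Longrightarrow> x \<in> P \<Longrightarrow> y \<in> P \<Longrightarrow> x + y \<in> P"
  by (metis diff_minus_eq_add hyperideal_diff hyperideal_uminus)

lemma hyperideal_mul_left: "hyperideal m P \<Longrightarrow> x \<in> P \<Longrightarrow> m r x \<subseteq> P"
  unfolding hyperideal_def by blast

lemma hyperideal_mul_right:
  "comm_mult_hyperring m \<Longrightarrow> hyperideal m P \<Longrightarrow> x \<in> P \<Longrightarrow> m x r \<subseteq> P"
  by (metis hr_mul_commute hyperideal_mul_left)

lemma hyperideal_unit_cancel:
  assumes cm: "comm_mult_hyperring m" and id: "hr_identity m e" and u: "u \<in> hr_units m e"
    and P: "hyperideal m P" and xu: "m x u \<subseteq> P"
  shows "x \<in> P"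
proof -
  obtain w where w: "e \<in> m u w"
    using u by (auto simp: hr_units_def)
  have "x \<in> hmul m {x} (m u w)"
    using w hr_identityD[OF id, of x] by (auto simp: hmul_def)
  then have "x \<in> hmul m (m x u) {w}"
    by (simp add: hr_mul_assoc[OF cm])
  then obtain s where "s \<in> m x u" "x \<in> m s w"
    by (auto simp: hmul_def)
  then show ?thesis
    using xu hyperideal_mul_right[OF cm P] by blast
qed

lemma Cfam_mul: "m x y \<in> Cfam m"
  by (metis Cfam.single Cfam.step hmul_singletons)

lemma Cfam_uminus:
  assumes cm: "comm_mult_hyperring m" and A: "A \<in> Cfam m"
  shows "uminus ` A \<in> Cfam m"
  using A
proof (induction A rule: Cfam.induct)
  case (single c)
  then show ?case
    using Cfam.single[of "- c" m] by simp
next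
  case (step A c)
  have "uminus ` hmul m A {c} = hmul m A {- c}"
    using hr_mul_uminus_right[OF cm] by (auto simp: hmul_def)
  then show ?case
    using Cfam.step[OF step.hyps] by simp
qed

lemma strong_C_hyperideal_diff_mem:
  assumes cm: "comm_mult_hyperring m" and P: "strong_C_hyperideal m P"
    and A: "A \<in> Cfam m" and a: "a \<in> A" and b: "b \<in> A"
  shows "a - b \<in> P"
proof -
  let ?D = "sadd A (uminus ` A)"
  have D: "?D \<in> CSums m"
    using CSums.step[OF CSums.base[OF A] Cfam_uminus[OF cm A]] .
  have "a + - a \<in> ?D" "a + - b \<in> ?D"
    using a b unfolding sadd_def by blast+
  moreover have "0 \<in> P"
    using P hyperideal_zero by (auto simp: strong_C_hyperideal_def)
  ultimately show ?thesis
    using P D unfolding strong_C_hyperideal_def by fastforce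
qed

lemma strong_C_hyperideal_double_cancel:
  assumes cm: "comm_mult_hyperring m" and id: "hr_identity m e"
    and two: "e + e \<in> hr_units m e" and P: "strong_C_hyperideal m P"
    and xx: "x + x \<in> P"
  shows "x \<in> P"
proof -
  have hP: "hyperideal m P"
    using P by (simp add: strong_C_hyperideal_def)
  have "m x (e + e) \<subseteq> P"
  proof
    fix s assume "s \<in> m x (e + e)"
    then obtain s1 s2 where s: "s = s1 + s2" "s1 \<in> m x e" "s2 \<in> m x e"
      using hr_mem_mul_add_right[OF cm] by metis
    have "s1 - x \<in> P" "s2 - x \<in> P"
      using s strong_C_hyperideal_diff_mem[OF cm P Cfam_mul] hr_identityD[OF id] by blast+
    moreover have "s = (s1 - x) + (s2 - x) + (x + x)"
      using s by simp
    ultimately show "s \<in> P"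
      using xx hyperideal_add[OF hP] by metis
  qed
  then show ?thesis
    using hyperideal_unit_cancel[OF cm id two hP] by blast
qed

lemma hr_mem_square_add_mod:
  assumes cm: "comm_mult_hyperring m" and P: "hyperideal m P"
    and xy: "m x y \<subseteq> P" and s: "s \<in> m (x + y) (x + y)"
  obtains a b where "a \<in> m x x" "b \<in> m y y" "s - (a + b) \<in> P"
proof -
  obtain s1 s2 where s12: "s = s1 + s2" "s1 \<in> m x (x + y)" "s2 \<in> m y (x + y)"
    using hr_mem_mul_add_left[OF cm s] by metis
  obtain a c where ac: "s1 = a + c" "a \<in> m x x" "c \<in> m x y"
    using hr_mem_mul_add_right[OF cm s12(2)] by metis
  obtain c' b where cb: "s2 = c' + b" "c' \<in> m y x" "b \<in> m y y"
    using hr_mem_mul_add_right[OF cm s12(3)] by metis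
  have "c \<in> P" "c' \<in> P"
    using ac cb xy hr_mul_commute[OF cm] by blast+
  moreover have "s - (a + b) = c + c'"
    using s12 ac cb by (simp add: algebra_simps)
  ultimately show ?thesis
    using that ac cb hyperideal_add[OF P] by metis
qed

lemma sdf_absorbingD:
  "sdf_absorbing m P \<Longrightarrow> x \<noteq> 0 \<Longrightarrow> y \<noteq> 0 \<Longrightarrow> ssub (m x x) (m y y) \<subseteq> P
    \<Longrightarrow> x - y \<in> P \<or> x + y \<in> P"
  by (simp add: sdf_absorbing_def)

lemma sdf_absorbing_square_cancel:
  assumes cm: "comm_mult_hyperring m" and P: "sdf_absorbing m P" and nz: "P \<noteq> {0}"
    and xx: "m x x \<subseteq> P"
  shows "x \<in> P"
proof -
  have hP: "hyperideal m P"
    using P by (simp add: sdf_absorbing_def)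
  obtain i where i: "i \<in> P" "i \<noteq> 0"
    using nz hyperideal_zero[OF hP] by blast
  show ?thesis
  proof (cases "x + i = 0")
    case True
    then show ?thesis
      using hyperideal_uminus[OF hP i(1)] by (simp add: add_eq_0_iff)
  next
    case False
    have "ssub (m (x + i) (x + i)) (m i i) \<subseteq> P"
    proof
      fix z assume "z \<in> ssub (m (x + i) (x + i)) (m i i)"
      then obtain s r where z: "z = s - r" "s \<in> m (x + i) (x + i)" "r \<in> m i i"
        by (auto simp: ssub_def)
      obtain a b where ab: "a \<in> m x x" "b \<in> m i i" "s - (a + b) \<in> P"
        using hr_mem_square_add_mod[OF cm hP hyperideal_mul_left[OF hP i(1)] z(2)] .
      have "a \<in> P" "b \<in> P" "r \<in> P"
        using ab xx z(3) hyperideal_mul_left[OF hP i(1)] by blast+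
      moreover have "z = (s - (a + b)) + (a + b) - r"
        using z by simp
      ultimately show "z \<in> P"
        using ab(3) hyperideal_add[OF hP] hyperideal_diff[OF hP] by metis
    qed
    then have "(x + i) - i \<in> P \<or> (x + i) + i \<in> P"
      by (rule sdf_absorbingD[OF P False i(2)])
    moreover have "x = ((x + i) + i) - i - i"
      by simp
    ultimately show ?thesis
      using i(1) hyperideal_diff[OF hP] by (metis add_diff_cancel)
  qed
qed

lemma strong_C_sdf_absorbing_prime:
  assumes cm: "comm_mult_hyperring m" and id: "hr_identity m e"
    and two: "e + e \<in> hr_units m e" and sdf: "sdf_absorbing m P"
    and P: "strong_C_hyperideal m P" and nz: "P \<noteq> {0}"
    and xy: "m x y \<subseteq> P"
  shows "x \<in> P \<or> y \<in> P"
proof -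
  have hP: "hyperideal m P"
    using P by (simp add: strong_C_hyperideal_def)
  have x_neg_y: "m x (- y) \<subseteq> P"
    using xy hyperideal_uminus[OF hP] by (auto simp: hr_mul_uminus_right[OF cm])
  consider "y = x" | "y = - x" | "x + y \<noteq> 0" "x + - y \<noteq> 0"
    by (metis add_eq_0_iff eq_neg_iff_add_eq_0)
  then show ?thesis
  proof cases
    case 1
    then show ?thesis
      using sdf_absorbing_square_cancel[OF cm sdf nz] xy by blast
  next
    case 2
    then show ?thesis
      using sdf_absorbing_square_cancel[OF cm sdf nz] x_neg_y by simp
  next
    case 3
    have "ssub (m (x + y) (x + y)) (m (x + - y) (x + - y)) \<subseteq> P"
    proof
      fix z assume "z \<in> ssub (m (x + y) (x + y)) (m (x + - y) (x + - y))"
      then obtain s r where z: "z = s - r" "s \<in> m (x + y) (x + y)"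
          "r \<in> m (x + - y) (x + - y)"
        by (auto simp: ssub_def)
      obtain a b where ab: "a \<in> m x x" "b \<in> m y y" "s - (a + b) \<in> P"
        using hr_mem_square_add_mod[OF cm hP xy z(2)] .
      obtain a' b' where ab': "a' \<in> m x x" "b' \<in> m y y" "r - (a' + b') \<in> P"
        using hr_mem_square_add_mod[OF cm hP x_neg_y z(3)] hr_mul_uminus_uminus[OF cm] by metis
      have "a - a' \<in> P" "b - b' \<in> P"
        using ab ab' strong_C_hyperideal_diff_mem[OF cm P Cfam_mul] by blast+
      moreover have "z = (s - (a + b)) - (r - (a' + b')) + (a - a') + (b - b')"
        using z by (simp add: algebra_simps)
      ultimately show "z \<in> P"
        using ab(3) ab'(3) hyperideal_add[OF hP] hyperideal_diff[OF hP] by metis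
    qed
    then have "(x + y) - (x + - y) \<in> P \<or> (x + y) + (x + - y) \<in> P"
      by (rule sdf_absorbingD[OF sdf 3])
    then have "y + y \<in> P \<or> x + x \<in> P"
      by (simp add: algebra_simps)
    then show ?thesis
      using strong_C_hyperideal_double_cancel[OF cm id two P] by blast
  qed
qed

theorem mainTheorem13:
  fixes m :: "'a::ab_group_add \<Rightarrow> 'a \<Rightarrow> 'a set" and e :: 'a and P :: "'a set"
  assumes "comm_mult_hyperring m"
    and "hr_identity m e"
    and "e + e \<in> hr_units m e"
    and "sdf_absorbing m P"
    and "strong_C_hyperideal m P"
    and "P \<noteq> {0}"
  shows "prime_hyperideal m P"
  using assms strong_C_sdf_absorbing_prime[OF assms]
  by (simp add: prime_hyperideal_def sdf_absorbing_def)

end
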